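(* Let $G$ be a connected threshold graph of order $n\ge 4$ and size $m$ with $n-1<m<\binom{n}{2}$, with $c$ type 1 vertices, backwards zero position sequence $(b_1,\ldots,b_z)$, $F_1=\sum_{i=1}^z b_i^2$, and lazy walk counts $\mathrm{LW}_k$ as in the context. Define $(\mathrm{LW}''_k)_{k\in\mathbb{N}_0}$ by $\mathrm{LW}''_0=1$ and \[\mathrm{LW}''_k=c\,\mathrm{LW}''_{k-1}+\sum_{r=0}^{k-3}\mathrm{LW}''_r\sum_{q\in\mathbb{N}_0}\binom{k-3-r-q}{q}F_1\Big(\sum_{i=1}^z b_i\Big)^q\qquad(k\in\mathbb{N}).\] Then $\mathrm{LW}''_k\ge \mathrm{LW}_k$ for every $k\in\mathbb{N}_0$.
   Context: A threshold graph is a simple graph whose vertices can be ordered $v_1,\ldots,v_n$ so that for each $2\le i\le n$, $v_i$ is either adjacent to all of $v_1,\ldots,v_{i-1}$ (then $a_i=1$) or to none of them (then $a_i=0$); by convention $a_1=1$. Vertex $v_i$ is of type 1 if $a_i=1$ and of type 0 if $a_i=0$; $c$ and $z$ are the numbers of type 1 and type 0 vertices. The backwards zero position sequence $(b_1,\ldots,b_z)$ is defined by letting $b_i$ be the number of type 1 vertices appearing after the $i$-th type 0 vertex in the order $v_1,\ldots,v_n$. A lazy walk of length $k\in\mathbb{N}_0$ is a sequence $u_0u_1\cdots u_k$ of vertices such that for each $1\le i\le k$, $u_i=u_{i-1}$ or $u_i$ is adjacent to $u_{i-1}$. For $k\in\mathbb{N}$, $\mathrm{LW}_k$ is the number of lazy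 walks of length $k-1$ in $G$ whose first and last vertices are both type 1 vertices, and $\mathrm{LW}_0=1$. Binomial coefficients $\binom{a}{q}$ with integer $a$ and $q\in\mathbb{N}_0$ are taken to be $0$ whenever $a<q$. *)

theory Defs
  imports Main
begin

text \<open>A threshold graph is represented by its creation sequence a = [a_1,...,a_n]
  (a list of booleans, True = type 1), with vertices v_1..v_n encoded as 0..n-1.
  For i < j, v_i and v_j are adjacent iff a_j = 1.\<close>

definition th_adj :: "bool list \<Rightarrow> nat \<Rightarrow> nat \<Rightarrow> bool" where
  "th_adj a i j \<longleftrightarrow> i \<noteq> j \<and> i < length a \<and> j < length a \<and> a ! (max i j)"

definition th_connected :: "bool list \<Rightarrow> bool" where
  "th_connected a \<longleftrightarrow> (\<forall>i < length a. \<forall>j < length a. (th_adj a)\<^sup>*\<^sup>* i j)"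

definition th_size :: "bool list \<Rightarrow> nat" where
  "th_size a = card {(i, j). i < j \<and> th_adj a i j}"

definition num_type1 :: "bool list \<Rightarrow> nat" where
  "num_type1 a = length (filter id a)"

definition bzps :: "bool list \<Rightarrow> nat list" where
  "bzps a = [length (filter id (drop (Suc p) a)). p \<leftarrow> [0..<length a], \<not> a ! p]"

definition lazy_walks :: "bool list \<Rightarrow> nat \<Rightarrow> nat list set" where
  "lazy_walks a len = {w. length w = Suc len \<and> set w \<subseteq> {..<length a} \<and>
      (\<forall>i < len. w ! Suc i = w ! i \<or> th_adj a (w ! i) (w ! Suc i))}"

definition LW :: "bool list \<Rightarrow> nat \<Rightarrow> nat" where
  "LW a k = (if k = 0 then 1 else
     card {w \<in> lazy_walks a (k - 1). a ! (hd w) \<and> a ! (last w)})"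

text \<open>LW''_k with parameters c, F1 and B = sum of the b_i. The inner sum over q is
  restricted to q \<le> k-3-r, outside of which the binomial coefficient vanishes.\<close>
fun LWpp :: "nat \<Rightarrow> nat \<Rightarrow> nat \<Rightarrow> nat \<Rightarrow> nat" where
  "LWpp c F B 0 = 1"
| "LWpp c F B (Suc k) = c * LWpp c F B k +
     (\<Sum>r < Suc k. if r + 3 \<le> Suc k then
        LWpp c F B r * (\<Sum>q \<le> Suc k - 3 - r. ((Suc k - 3 - r - q) choose q) * F * B ^ q)
      else 0)"

end

theory Submission
  imports Defs
begin

text \<open>Let \<open>W\<^sub>k(v)\<close> be the number of lazy walks of length \<open>k\<close> from a type 1 vertex to \<open>v\<close>,
  \<open>L\<^sub>k = \<Sum>\<^sub>t W\<^sub>k(t)\<close> over the type 1 vertices (so that \<open>LW\<^sub>k\<^sub>+\<^sub>1 = L\<^sub>k\<close>) and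
  \<open>G\<^sub>k = \<Sum>\<^sub>z b\<^sub>z W\<^sub>k(z)\<close> over the type 0 vertices, where \<open>b\<^sub>z\<close> is the degree of \<open>z\<close>:
  type 0 vertices are only adjacent to later type 1 vertices. Extending a walk by one step gives
  \<open>L\<^sub>k\<^sub>+\<^sub>1 \<le> c L\<^sub>k + G\<^sub>k\<close>, and extending it by two steps gives
  \<open>G\<^sub>k\<^sub>+\<^sub>2 \<le> G\<^sub>k\<^sub>+\<^sub>1 + F\<^sub>1 L\<^sub>k + B G\<^sub>k\<close> with \<open>B = \<Sum> b\<^sub>i\<close>, where the only loss is forgetting that
  the middle type 1 vertex of a two-step extension must be adjacent to its type 0 endpoint.
  The sequence \<open>LW''\<close> satisfies these recurrences with equality, with \<open>G\<^sub>k\<close> replaced by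
  \<open>F\<^sub>1\<close> times the convolution of \<open>LW''\<close> with the polynomials
  \<open>Q\<^sub>m = \<Sum>\<^sub>q binom(m-q, q) B\<^sup>q\<close>, which obey the Fibonacci-type recurrence \<open>Q\<^sub>m\<^sub>+\<^sub>2 = Q\<^sub>m\<^sub>+\<^sub>1 + B Q\<^sub>m\<close>;
  a simultaneous induction then yields \<open>L\<^sub>k \<le> LW''\<^sub>k\<^sub>+\<^sub>1\<close>.\<close>

definition fib_poly :: "nat \<Rightarrow> nat \<Rightarrow> nat" where
  "fib_poly B m = (\<Sum>q\<le>m. ((m - q) choose q) * B ^ q)"

lemma fib_poly_0 [simp]: "fib_poly B 0 = 1"
  and fib_poly_1 [simp]: "fib_poly B (Suc 0) = 1"
  by (simp_all add: fib_poly_def)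

lemma fib_poly_Suc_Suc: "fib_poly B (Suc (Suc m)) = fib_poly B (Suc m) + B * fib_poly B m"
proof -
  have pascal: "(Suc m - q) choose Suc q = ((m - q) choose q) + ((m - q) choose Suc q)"
    if "q \<le> Suc m" for q
    using that by (cases "q \<le> m") (simp_all add: Suc_diff_le)
  have "fib_poly B (Suc (Suc m)) = 1 + (\<Sum>q\<le>Suc m. ((Suc m - q) choose Suc q) * B ^ Suc q)"
    unfolding fib_poly_def by (subst sum.atMost_Suc_shift) simp
  also have "\<dots> = 1 + (\<Sum>q\<le>Suc m. ((m - q) choose Suc q) * B ^ Suc q)
      + B * (\<Sum>q\<le>Suc m. ((m - q) choose q) * B ^ q)"
    by (simp add: pascal sum.distrib sum_distrib_left algebra_simps)
  also have "1 + (\<Sum>q\<le>Suc m. ((m - q) choose Suc q) * B ^ Suc q) = fib_poly B (Suc m)"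
    unfolding fib_poly_def by (subst sum.atMost_Suc_shift) simp
  also have "(\<Sum>q\<le>Suc m. ((m - q) choose q) * B ^ q) = fib_poly B m"
    unfolding fib_poly_def by simp
  finally show ?thesis .
qed

definition LWpp_fib_conv :: "nat \<Rightarrow> nat \<Rightarrow> nat \<Rightarrow> nat \<Rightarrow> nat" where
  "LWpp_fib_conv c F B j = (\<Sum>r<j. LWpp c F B r * fib_poly B (j - Suc r))"

lemma LWpp_Suc_Suc_Suc:
  "LWpp c F B (Suc (Suc (Suc j))) = c * LWpp c F B (Suc (Suc j)) + F * LWpp_fib_conv c F B (Suc j)"
proof -
  have inner: "(\<Sum>q\<le>m. ((m - q) choose q) * F * B ^ q) = F * fib_poly B m" for m
    by (simp add: fib_poly_def sum_distrib_left mult_ac)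
  show ?thesis
    by (simp only: LWpp.simps inner) (simp add: LWpp_fib_conv_def sum_distrib_left algebra_simps)
qed

lemma LWpp_fib_conv_Suc_Suc:
  "LWpp_fib_conv c F B (Suc (Suc j))
     = LWpp_fib_conv c F B (Suc j) + B * LWpp_fib_conv c F B j + LWpp c F B (Suc j)"
proof -
  let ?x = "LWpp c F B"
  have fib: "fib_poly B (Suc j - r) = fib_poly B (j - r) + B * fib_poly B (j - Suc r)" if "r < j" for r
  proof -
    have "Suc j - r = Suc (Suc (j - Suc r))" "j - r = Suc (j - Suc r)" using that by auto
    then show ?thesis by (simp add: fib_poly_Suc_Suc)
  qed
  have "LWpp_fib_conv c F B (Suc (Suc j)) = (\<Sum>r<j. ?x r * fib_poly B (Suc j - r)) + ?x j + ?x (Suc j)"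
    by (simp add: LWpp_fib_conv_def)
  also have "\<dots> = (\<Sum>r<j. ?x r * fib_poly B (j - r)) + ?x j + B * LWpp_fib_conv c F B j + ?x (Suc j)"
    by (simp add: fib LWpp_fib_conv_def sum.distrib sum_distrib_left algebra_simps)
  also have "(\<Sum>r<j. ?x r * fib_poly B (j - r)) + ?x j = LWpp_fib_conv c F B (Suc j)"
    by (simp add: LWpp_fib_conv_def)
  finally show ?thesis by simp
qed

lemma recurrence_le_LWpp:
  fixes L G :: "nat \<Rightarrow> nat"
  assumes L0: "L 0 \<le> c" and G0: "G 0 = 0" and G1: "G 1 \<le> F"
    and L_Suc: "\<And>k. L (Suc k) \<le> c * L k + G k"
    and G_Suc_Suc: "\<And>k. G (Suc (Suc k)) \<le> G (Suc k) + F * L k + B * G k"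
  shows "L k \<le> LWpp c F B (Suc k)"
proof -
  let ?P = "\<lambda>k. L k \<le> LWpp c F B (Suc k) \<and> G k \<le> F * LWpp_fib_conv c F B k"
  have "?P k \<and> ?P (Suc k)"
  proof (induction k)
    case 0
    have "L 1 \<le> c * c" using L_Suc[of 0] L0 G0 by (simp add: order_trans mult_left_mono)
    then show ?case using L0 G0 G1 by (simp add: LWpp_fib_conv_def)
  next
    case (Suc k)
    have "L (Suc (Suc k)) \<le> c * L (Suc k) + G (Suc k)" by (rule L_Suc)
    also have "\<dots> \<le> c * LWpp c F B (Suc (Suc k)) + F * LWpp_fib_conv c F B (Suc k)"
      using Suc.IH by (intro add_mono mult_left_mono) auto
    also have "\<dots> = LWpp c F B (Suc (Suc (Suc k)))" by (simp only: LWpp_Suc_Suc_Suc)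
    finally have L: "L (Suc (Suc k)) \<le> LWpp c F B (Suc (Suc (Suc k)))" .
    have "G (Suc (Suc k)) \<le> G (Suc k) + F * L k + B * G k" by (rule G_Suc_Suc)
    also have "\<dots> \<le> F * LWpp_fib_conv c F B (Suc k) + F * LWpp c F B (Suc k)
        + B * (F * LWpp_fib_conv c F B k)"
      using Suc.IH by (intro add_mono mult_left_mono) auto
    also have "\<dots> = F * LWpp_fib_conv c F B (Suc (Suc k))"
      by (simp add: LWpp_fib_conv_Suc_Suc algebra_simps)
    finally show ?case using L Suc.IH by simp
  qed
  then show ?thesis by simp
qed

lemma sum_le_sum_Un:
  fixes f :: "'a \<Rightarrow> nat"
  assumes "finite A" "finite B" "C \<subseteq> A \<union> B"
  shows "sum f C \<le> sum f A + sum f B"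
proof -
  have "sum f C \<le> sum f (A \<union> B)" using assms by (intro sum_mono2) auto
  also have "\<dots> \<le> sum f A + sum f B" using sum.union_inter[OF assms(1,2), of f] by linarith
  finally show ?thesis .
qed

definition lazy_walks_to ::
    "('v \<Rightarrow> 'v \<Rightarrow> bool) \<Rightarrow> 'v set \<Rightarrow> ('v \<Rightarrow> bool) \<Rightarrow> nat \<Rightarrow> 'v \<Rightarrow> 'v list set" where
  "lazy_walks_to E V P k v = {w. length w = Suc k \<and> set w \<subseteq> V \<and>
      (\<forall>i<k. w ! Suc i = w ! i \<or> E (w ! i) (w ! Suc i)) \<and> P (hd w) \<and> last w = v}"

lemma finite_lazy_walks_to: "finite V \<Longrightarrow> finite (lazy_walks_to E V P k v)"
  by (rule finite_subset[OF _ finite_lists_length_eq[of V "Suc k"]]) (auto simp: lazy_walks_to_def)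

lemma card_lazy_walks_to_0: "card (lazy_walks_to E V P 0 v) \<le> (if P v then 1 else 0)"
proof -
  have "lazy_walks_to E V P 0 v \<subseteq> (if P v then {[v]} else {})"
    by (auto simp: lazy_walks_to_def length_Suc_conv)
  then show ?thesis by (auto split: if_splits dest: card_mono[rotated])
qed

lemma card_lazy_walks_to_Suc:
  assumes "finite V"
  shows "card (lazy_walks_to E V P (Suc k) v)
    \<le> (\<Sum>u\<in>{u\<in>V. u = v \<or> E u v}. card (lazy_walks_to E V P k u))"
proof -
  let ?N = "{u\<in>V. u = v \<or> E u v}"
  have "lazy_walks_to E V P (Suc k) v \<subseteq> (\<Union>u\<in>?N. (\<lambda>w. w @ [v]) ` lazy_walks_to E V P k u)"
  proof
    fix w assume w: "w \<in> lazy_walks_to E V P (Suc k) v"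
    then have "w \<noteq> []" "last w = v" by (auto simp: lazy_walks_to_def)
    define w' where "w' = butlast w"
    have w': "w = w' @ [v]"
      using append_butlast_last_id[OF \<open>w \<noteq> []\<close>] \<open>last w = v\<close> by (simp add: w'_def)
    have len: "length w' = Suc k" using w by (simp add: w'_def lazy_walks_to_def)
    have step: "\<forall>i<Suc k. w ! Suc i = w ! i \<or> E (w ! i) (w ! Suc i)" and "set w \<subseteq> V" "P (hd w)"
      using w unfolding lazy_walks_to_def by auto
    moreover have "w' \<noteq> []" using len by auto
    ultimately have "w' \<in> lazy_walks_to E V P k (last w')"
      unfolding lazy_walks_to_def
    proof (intro CollectI conjI allI impI)
      fix i assume "i < k"
      then show "w' ! Suc i = w' ! i \<or> E (w' ! i) (w' ! Suc i)"
        using step[rule_format, of i] len w' by (simp add: nth_append)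
    qed (use len w' in auto)
    moreover have "last w' \<in> ?N"
    proof -
      have "w ! k = last w'" "w ! Suc k = v" using w' len \<open>w' \<noteq> []\<close> by (simp_all add: nth_append last_conv_nth)
      then show ?thesis using step[rule_format, of k] \<open>set w \<subseteq> V\<close> \<open>w' \<noteq> []\<close> w' by auto
    qed
    ultimately show "w \<in> (\<Union>u\<in>?N. (\<lambda>w. w @ [v]) ` lazy_walks_to E V P k u)" using w' by blast
  qed
  then have "card (lazy_walks_to E V P (Suc k) v)
      \<le> card (\<Union>u\<in>?N. (\<lambda>w. w @ [v]) ` lazy_walks_to E V P k u)"
    using assms by (intro card_mono) (auto simp: finite_lazy_walks_to)
  also have "\<dots> \<le> (\<Sum>u\<in>?N. card ((\<lambda>w. w @ [v]) ` lazy_walks_to E V P k u))"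
    by (rule card_UN_le) (simp add: assms)
  also have "\<dots> \<le> (\<Sum>u\<in>?N. card (lazy_walks_to E V P k u))"
    by (intro sum_mono card_image_le finite_lazy_walks_to assms)
  finally show ?thesis .
qed

definition type1 :: "bool list \<Rightarrow> nat set" where
  "type1 a = {t. t < length a \<and> a ! t}"

definition type0 :: "bool list \<Rightarrow> nat set" where
  "type0 a = {z. z < length a \<and> \<not> a ! z}"

lemma finite_type1 [simp]: "finite (type1 a)"
  and finite_type0 [simp]: "finite (type0 a)"
  by (simp_all add: type1_def type0_def)

definition type1_degree :: "bool list \<Rightarrow> nat \<Rightarrow> nat" where
  "type1_degree a v = card {t \<in> type1 a. th_adj a t v}"

lemma th_adj_sym: "th_adj a u v = th_adj a v u"
  unfolding th_adj_def by (auto simp: max.commute)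

lemma th_adj_type0_imp_type1: "z \<in> type0 a \<Longrightarrow> th_adj a u z \<Longrightarrow> u \<in> type1 a"
  unfolding th_adj_def type0_def type1_def by (auto simp: max_def split: if_splits)

definition type1_walks_to :: "bool list \<Rightarrow> nat \<Rightarrow> nat \<Rightarrow> nat" where
  "type1_walks_to a k v = card (lazy_walks_to (th_adj a) {..<length a} ((!) a) k v)"

definition type1_walks :: "bool list \<Rightarrow> nat \<Rightarrow> nat" where
  "type1_walks a k = (\<Sum>t\<in>type1 a. type1_walks_to a k t)"

definition weighted_type0_walks :: "bool list \<Rightarrow> nat \<Rightarrow> nat" where
  "weighted_type0_walks a k = (\<Sum>z\<in>type0 a. type1_degree a z * type1_walks_to a k z)"

lemma type1_walks_to_0_le: "type1_walks_to a 0 v \<le> 1"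
  using card_lazy_walks_to_0[of "th_adj a" "{..<length a}" "(!) a" v]
  by (simp add: type1_walks_to_def split: if_splits)

lemma type1_walks_to_0_type0: "z \<in> type0 a \<Longrightarrow> type1_walks_to a 0 z = 0"
  using card_lazy_walks_to_0[of "th_adj a" "{..<length a}" "(!) a" z]
  by (simp add: type1_walks_to_def type0_def)

lemma type1_walks_to_Suc_type1:
  assumes "t \<in> type1 a"
  shows "type1_walks_to a (Suc k) t
    \<le> type1_walks a k + (\<Sum>z\<in>{z \<in> type0 a. th_adj a z t}. type1_walks_to a k z)"
proof -
  have "{u \<in> {..<length a}. u = t \<or> th_adj a u t} \<subseteq> type1 a \<union> {z \<in> type0 a. th_adj a z t}"
    using assms by (auto simp: type1_def type0_def)
  then show ?thesis
    unfolding type1_walks_to_def type1_walks_def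
    by (intro order_trans[OF card_lazy_walks_to_Suc sum_le_sum_Un]) auto
qed

lemma type1_walks_to_Suc_type0:
  assumes "z \<in> type0 a"
  shows "type1_walks_to a (Suc k) z
    \<le> type1_walks_to a k z + (\<Sum>t\<in>{t \<in> type1 a. th_adj a t z}. type1_walks_to a k t)"
proof -
  have "{u \<in> {..<length a}. u = z \<or> th_adj a u z} \<subseteq> {z} \<union> {t \<in> type1 a. th_adj a t z}"
    using th_adj_type0_imp_type1[OF assms] by auto
  then have "type1_walks_to a (Suc k) z
      \<le> (\<Sum>u\<in>{z}. type1_walks_to a k u) + (\<Sum>t\<in>{t \<in> type1 a. th_adj a t z}. type1_walks_to a k t)"
    unfolding type1_walks_to_def
    by (intro order_trans[OF card_lazy_walks_to_Suc sum_le_sum_Un]) auto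
  then show ?thesis by simp
qed

lemma sum_type1_type0_neighbours:
  "(\<Sum>t\<in>type1 a. \<Sum>z\<in>{z \<in> type0 a. th_adj a z t}. f z) = (\<Sum>z\<in>type0 a. type1_degree a z * f z)"
proof -
  have "(\<Sum>t\<in>type1 a. \<Sum>z\<in>{z \<in> type0 a. th_adj a z t}. f z)
      = (\<Sum>z\<in>type0 a. \<Sum>t\<in>{t \<in> type1 a. th_adj a z t}. f z)"
    by (rule sum.swap_restrict) simp_all
  also have "\<dots> = (\<Sum>z\<in>type0 a. type1_degree a z * f z)"
    unfolding type1_degree_def by (simp add: th_adj_sym[of a z for z] cong: Collect_cong)
  finally show ?thesis .
qed

lemma type1_walks_0: "type1_walks a 0 \<le> card (type1 a)"
  unfolding type1_walks_def
  using sum_mono[of "type1 a" "type1_walks_to a 0" "\<lambda>_. 1"] type1_walks_to_0_le by simp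

lemma weighted_type0_walks_0: "weighted_type0_walks a 0 = 0"
  by (simp add: weighted_type0_walks_def type1_walks_to_0_type0)

lemma type1_walks_Suc:
  "type1_walks a (Suc k) \<le> card (type1 a) * type1_walks a k + weighted_type0_walks a k"
proof -
  have "type1_walks a (Suc k)
      \<le> (\<Sum>t\<in>type1 a. type1_walks a k + (\<Sum>z\<in>{z \<in> type0 a. th_adj a z t}. type1_walks_to a k z))"
    unfolding type1_walks_def[of a "Suc k"] by (intro sum_mono type1_walks_to_Suc_type1)
  also have "\<dots> = card (type1 a) * type1_walks a k + weighted_type0_walks a k"
    by (simp add: sum.distrib sum_type1_type0_neighbours weighted_type0_walks_def)
  finally show ?thesis .
qed

lemma weighted_type0_walks_Suc:
  "weighted_type0_walks a (Suc k) \<le> weighted_type0_walks a k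
     + (\<Sum>z\<in>type0 a. type1_degree a z * (\<Sum>t\<in>{t \<in> type1 a. th_adj a t z}. type1_walks_to a k t))"
  unfolding weighted_type0_walks_def sum.distrib[symmetric] distrib_left[symmetric]
  by (intro sum_mono mult_left_mono type1_walks_to_Suc_type0) auto

lemma weighted_type0_walks_1: "weighted_type0_walks a (Suc 0) \<le> (\<Sum>z\<in>type0 a. type1_degree a z ^ 2)"
proof -
  have "weighted_type0_walks a (Suc 0)
      \<le> (\<Sum>z\<in>type0 a. type1_degree a z * (\<Sum>t\<in>{t \<in> type1 a. th_adj a t z}. type1_walks_to a 0 t))"
    using weighted_type0_walks_Suc[of a 0] by (simp add: weighted_type0_walks_0)
  also have "\<dots> \<le> (\<Sum>z\<in>type0 a. type1_degree a z * type1_degree a z)"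
    unfolding type1_degree_def
    by (intro sum_mono mult_left_mono order_trans[OF sum_mono[OF type1_walks_to_0_le]]) simp_all
  finally show ?thesis by (simp add: power2_eq_square)
qed

lemma weighted_type0_walks_Suc_Suc:
  "weighted_type0_walks a (Suc (Suc k)) \<le> weighted_type0_walks a (Suc k)
     + (\<Sum>z\<in>type0 a. type1_degree a z ^ 2) * type1_walks a k
     + (\<Sum>z\<in>type0 a. type1_degree a z) * weighted_type0_walks a k"
proof -
  let ?Y = "\<lambda>t. \<Sum>z\<in>{z \<in> type0 a. th_adj a z t}. type1_walks_to a k z"
  have two_steps: "(\<Sum>t\<in>{t \<in> type1 a. th_adj a t z}. type1_walks_to a (Suc k) t)
      \<le> type1_degree a z * type1_walks a k + weighted_type0_walks a k" for z
  proof -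
    have "(\<Sum>t\<in>{t \<in> type1 a. th_adj a t z}. type1_walks_to a (Suc k) t)
        \<le> (\<Sum>t\<in>{t \<in> type1 a. th_adj a t z}. type1_walks a k + ?Y t)"
      by (intro sum_mono type1_walks_to_Suc_type1) simp
    also have "\<dots> \<le> type1_degree a z * type1_walks a k + (\<Sum>t\<in>type1 a. ?Y t)"
      unfolding sum.distrib type1_degree_def by (intro add_mono sum_mono2) auto
    also have "(\<Sum>t\<in>type1 a. ?Y t) = weighted_type0_walks a k"
      by (simp add: sum_type1_type0_neighbours weighted_type0_walks_def)
    finally show ?thesis .
  qed
  have "(\<Sum>z\<in>type0 a. type1_degree a z * (\<Sum>t\<in>{t \<in> type1 a. th_adj a t z}. type1_walks_to a (Suc k) t))
      \<le> (\<Sum>z\<in>type0 a. type1_degree a z ^ 2 * type1_walks a k + type1_degree a z * weighted_type0_walks a k)"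
  proof (intro sum_mono)
    fix z
    show "type1_degree a z * (\<Sum>t\<in>{t \<in> type1 a. th_adj a t z}. type1_walks_to a (Suc k) t)
        \<le> type1_degree a z ^ 2 * type1_walks a k + type1_degree a z * weighted_type0_walks a k"
      using mult_left_mono[OF two_steps[of z], of "type1_degree a z"]
      by (simp add: power2_eq_square algebra_simps)
  qed
  also have "\<dots> = (\<Sum>z\<in>type0 a. type1_degree a z ^ 2) * type1_walks a k
      + (\<Sum>z\<in>type0 a. type1_degree a z) * weighted_type0_walks a k"
    by (simp add: sum.distrib sum_distrib_right)
  finally show ?thesis using weighted_type0_walks_Suc[of a "Suc k"] by linarith
qed

lemma num_type1_eq_card_type1: "num_type1 a = card (type1 a)"
  unfolding num_type1_def type1_def by (simp add: length_filter_conv_card)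

lemma length_filter_drop_eq_type1_degree:
  assumes "z \<in> type0 a"
  shows "length (filter id (drop (Suc z) a)) = type1_degree a z"
proof -
  let ?I = "{i. i < length (drop (Suc z) a) \<and> drop (Suc z) a ! i}"
  have "{t \<in> type1 a. th_adj a t z} = (+) (Suc z) ` ?I"
  proof (intro set_eqI iffI)
    fix t assume "t \<in> {t \<in> type1 a. th_adj a t z}"
    then have "z < t" "t < length a" "a ! t"
      using assms by (auto simp: type1_def type0_def th_adj_def max_def split: if_splits)
    then show "t \<in> (+) (Suc z) ` ?I"
      by (auto simp: nth_drop intro!: image_eqI[of _ _ "t - Suc z"])
  qed (use assms in \<open>auto simp: type1_def type0_def th_adj_def nth_drop\<close>)
  then show ?thesis
    by (simp add: type1_degree_def length_filter_conv_card card_image inj_on_def del: length_drop)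
qed

lemma sum_list_map_bzps: "sum_list (map h (bzps a)) = (\<Sum>z\<in>type0 a. h (type1_degree a z))"
proof -
  let ?zs = "filter (\<lambda>p. \<not> a ! p) [0..<length a]"
  have comprehension: "[f p. p \<leftarrow> xs, \<not> a ! p] = map f (filter (\<lambda>p. \<not> a ! p) xs)" for f xs
    by (induction xs) auto
  have "sum_list (map h (bzps a)) = (\<Sum>p\<in>set ?zs. h (length (filter id (drop (Suc p) a))))"
    unfolding bzps_def comprehension by (simp add: sum_list_distinct_conv_sum_set)
  also have "set ?zs = type0 a" by (auto simp: type0_def)
  finally show ?thesis
    using length_filter_drop_eq_type1_degree[of _ a] by (auto simp: id_def intro!: sum.cong)
qed

lemma LW_Suc_le_type1_walks: "LW a (Suc k) \<le> type1_walks a k"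
proof -
  let ?W = "\<lambda>t. lazy_walks_to (th_adj a) {..<length a} ((!) a) k t"
  have walks_split: "{w \<in> lazy_walks a k. a ! hd w \<and> a ! last w} \<subseteq> (\<Union>t\<in>type1 a. ?W t)"
  proof
    fix w assume w: "w \<in> {w \<in> lazy_walks a k. a ! hd w \<and> a ! last w}"
    then have "w \<noteq> []" "set w \<subseteq> {..<length a}" by (auto simp: lazy_walks_def)
    then have "last w < length a" using last_in_set by blast
    then show "w \<in> (\<Union>t\<in>type1 a. ?W t)"
      using w by (auto simp: lazy_walks_def lazy_walks_to_def type1_def)
  qed
  have "finite (\<Union>t\<in>type1 a. ?W t)" by (simp add: finite_lazy_walks_to)
  then have "LW a (Suc k) \<le> card (\<Union>t\<in>type1 a. ?W t)"
    unfolding LW_def using card_mono[OF _ walks_split] by simp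
  also have "\<dots> \<le> type1_walks a k"
    unfolding type1_walks_def type1_walks_to_def by (rule card_UN_le) simp
  finally show ?thesis .
qed

theorem lemma5p2:
  fixes a :: "bool list" and k :: nat
  assumes "length a \<ge> 4"
    and "a ! 0"
    and "th_connected a"
    and "length a - 1 < th_size a"
    and "th_size a < length a choose 2"
  shows "LWpp (num_type1 a) (\<Sum>b \<leftarrow> bzps a. b ^ 2) (sum_list (bzps a)) k \<ge> LW a k"
proof (cases k)
  case 0
  then show ?thesis by (simp add: LW_def)
next
  case (Suc j)
  have "LW a k \<le> type1_walks a j" using LW_Suc_le_type1_walks Suc by simp
  also have "\<dots> \<le> LWpp (card (type1 a)) (\<Sum>z\<in>type0 a. type1_degree a z ^ 2)
      (\<Sum>z\<in>type0 a. type1_degree a z) (Suc j)"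
    by (rule recurrence_le_LWpp[where G = "weighted_type0_walks a"])
      (simp_all add: type1_walks_0 weighted_type0_walks_0 weighted_type0_walks_1
        type1_walks_Suc weighted_type0_walks_Suc_Suc)
  also have "\<dots> = LWpp (num_type1 a) (\<Sum>b \<leftarrow> bzps a. b ^ 2) (sum_list (bzps a)) k"
    using sum_list_map_bzps[of "\<lambda>b. b" a] sum_list_map_bzps[of "\<lambda>b. b ^ 2" a] Suc
    by (simp only: num_type1_eq_card_type1 map_ident)
  finally show ?thesis .
qed

end
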